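(* Let $\alpha>0$ and let $f$ be an entire function with $f\in\bigcup_{p\ge 1}F^p_\alpha$. Then $$\lim_{p\to+\infty}\|f\|_{p,\alpha}=\|f\|_{\infty,\alpha}.$$
   Context: For $\alpha>0$ and $0<p<\infty$, $F^p_\alpha$ is the space of entire functions $f$ on $\mathbb{C}$ with $\|f\|_{p,\alpha}=\left[\frac{p\alpha}{2\pi}\int_{\mathbb{C}}|f(z)e^{-\alpha|z|^2/2}|^p\,dA(z)\right]^{1/p}<\infty$, where $dA$ is area measure. $F^\infty_\alpha$ is the space of entire $f$ with $\|f\|_{\infty,\alpha}=\operatorname{ess\,sup}_{z\in\mathbb{C}}|f(z)|e^{-\alpha|z|^2/2}<\infty$. *)

theory Defs
  imports "HOL-Analysis.Analysis" "HOL-Probability.Essential_Supremum"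
begin

definition fock_integral :: "real \<Rightarrow> real \<Rightarrow> (complex \<Rightarrow> complex) \<Rightarrow> ennreal" where
  "fock_integral p \<alpha> f =
     (\<integral>\<^sup>+ z. ennreal ((cmod (f z) * exp (- \<alpha> * (cmod z)\<^sup>2 / 2)) powr p) \<partial>lborel)"

definition fock_space :: "real \<Rightarrow> real \<Rightarrow> (complex \<Rightarrow> complex) set" where
  "fock_space p \<alpha> = {f. f holomorphic_on UNIV \<and> fock_integral p \<alpha> f < \<infinity>}"

text \<open>The norm ||f||_{p,alpha} (meaningful when the integral is finite).\<close>
definition fock_norm :: "real \<Rightarrow> real \<Rightarrow> (complex \<Rightarrow> complex) \<Rightarrow> real" where
  "fock_norm p \<alpha> f = (p * \<alpha> / (2 * pi) * enn2real (fock_integral p \<alpha> f)) powr (1 / p)"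

definition fock_norm_inf :: "real \<Rightarrow> (complex \<Rightarrow> complex) \<Rightarrow> ereal" where
  "fock_norm_inf \<alpha> f = esssup lborel (\<lambda>z. ereal (cmod (f z) * exp (- \<alpha> * (cmod z)\<^sup>2 / 2)))"

end

theory Submission
  imports Defs "HOL-Complex_Analysis.Complex_Analysis" "HOL-Real_Asymp.Real_Asymp"
begin

text \<open>
  The weight F(z) = |f(z)| e^{-\<alpha>|z|^2/2} of a function in F^{p_0}_\<alpha>, p_0 \<ge> 1, is bounded.
  Indeed, h(w) = f(w) exp(\<alpha>|z|^2/2 - \<alpha> conj(z) w) is entire with
  |h(z + u)| = F(z + u) e^{\<alpha>|u|^2/2}. Cauchy's formula on the squares with centre z and half
  side s, averaged over s \<in> [1/2, 1], bounds |h(z)| = F(z) by the integral of |h(z + u)| over the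
  square [-1, 1]^2, hence by e^\<alpha> times the integral of 1 + F^{p_0}.

  A bounded F in L^{p_0} has L^p norms tending to its essential supremum, on any measure space,
  and the normalising factors (p\<alpha>/2\<pi>)^{1/p} tend to 1.
\<close>

section \<open>Lebesgue measure on the complex plane\<close>

lemma measurable_Complex [measurable]:
  assumes [measurable]: "f \<in> borel_measurable M" "g \<in> borel_measurable M"
  shows "(\<lambda>x. Complex (f x) (g x)) \<in> borel_measurable M"
  unfolding Complex_eq by measurable

lemma distr_pair_lborel_Complex:
  "distr (lborel \<Otimes>\<^sub>M lborel) borel (\<lambda>(x, y). Complex x y) = (lborel :: complex measure)"
proof (rule lborel_eqI[symmetric])
  fix l u :: complex
  assume "\<And>b. b \<in> Basis \<Longrightarrow> l \<bullet> b \<le> u \<bullet> b"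
  from this[of 1] this[of \<i>] have "Re l \<le> Re u" "Im l \<le> Im u"
    by (auto simp: Basis_complex_def)
  moreover have "(\<lambda>(x, y). Complex x y) -` box l u \<inter> space (lborel \<Otimes>\<^sub>M lborel)
      = {Re l<..<Re u} \<times> {Im l<..<Im u}"
    by (auto simp: in_box_complex_iff space_pair_measure)
  ultimately show "emeasure (distr (lborel \<Otimes>\<^sub>M lborel) borel (\<lambda>(x, y). Complex x y)) (box l u)
      = (\<Prod>b\<in>Basis. (u - l) \<bullet> b)"
    by (simp add: emeasure_distr case_prod_beta' lborel.emeasure_pair_measure_Times
        Basis_complex_def ennreal_mult)
qed simp

lemma nn_integral_lborel_complex:
  assumes [measurable]: "G \<in> borel_measurable borel"
  shows "(\<integral>\<^sup>+z. G z \<partial>lborel) = (\<integral>\<^sup>+y. (\<integral>\<^sup>+x. G (Complex x y) \<partial>lborel) \<partial>lborel)"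
proof -
  have "(\<integral>\<^sup>+z. G z \<partial>lborel)
      = (\<integral>\<^sup>+z. G z \<partial>distr (lborel \<Otimes>\<^sub>M lborel) borel (\<lambda>(x, y). Complex x y))"
    by (simp add: distr_pair_lborel_Complex)
  also have "\<dots> = (\<integral>\<^sup>+q. G (Complex (fst q) (snd q)) \<partial>(lborel \<Otimes>\<^sub>M lborel))"
    by (subst nn_integral_distr) (auto simp: case_prod_beta')
  also have "\<dots> = (\<integral>\<^sup>+y. (\<integral>\<^sup>+x. G (Complex x y) \<partial>lborel) \<partial>lborel)"
    by (subst lborel_pair.nn_integral_snd[symmetric]) auto
  finally show ?thesis .
qed

lemma lborel_distr_mult_ii: "distr lborel borel (\<lambda>z. \<i> * z) = (lborel :: complex measure)"
proof (rule lborel_eqI[symmetric])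
  fix l u :: complex
  assume "\<And>b. b \<in> Basis \<Longrightarrow> l \<bullet> b \<le> u \<bullet> b"
  from this[of 1] this[of \<i>] have "Re l \<le> Re u" "Im l \<le> Im u"
    by (auto simp: Basis_complex_def)
  moreover have "(\<lambda>z. \<i> * z) -` box l u \<inter> space lborel
      = box (Complex (Im l) (- Re u)) (Complex (Im u) (- Re l))"
    by (auto simp: in_box_complex_iff)
  ultimately show "emeasure (distr lborel borel (\<lambda>z. \<i> * z)) (box l u) = (\<Prod>b\<in>Basis. (u - l) \<bullet> b)"
    by (simp add: emeasure_distr emeasure_lborel_box_eq Basis_complex_def)
qed simp

lemma nn_integral_lborel_mult_ii:
  assumes "G \<in> borel_measurable borel"
  shows "(\<integral>\<^sup>+z. G (\<i> * z) \<partial>lborel) = (\<integral>\<^sup>+z. G z \<partial>(lborel :: complex measure))"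
  by (subst (2) lborel_distr_mult_ii[symmetric]) (simp add: nn_integral_distr assms)

lemma nn_integral_lborel_translate:
  fixes a :: "'a::euclidean_space"
  assumes "G \<in> borel_measurable borel"
  shows "(\<integral>\<^sup>+z. G (a + z) \<partial>lborel) = (\<integral>\<^sup>+z. G z \<partial>lborel)"
  by (subst (2) lborel_distr_plus[symmetric, of a]) (simp add: nn_integral_distr assms)

lemma nn_integral_interval_rescale:
  fixes f :: "real \<Rightarrow> ennreal"
  assumes [measurable]: "f \<in> borel_measurable borel" and "a < b"
  shows "(\<integral>\<^sup>+t\<in>{a..b}. f t \<partial>lborel) = ennreal (b - a) * (\<integral>\<^sup>+x\<in>{0..1}. f (a + (b - a) * x) \<partial>lborel)"
proof -
  have "indicator {a..b} (a + (b - a) * x) = (indicator {0..1} x :: ennreal)" for x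
  proof -
    have "0 \<le> (b - a) * x \<longleftrightarrow> 0 \<le> x"
      using \<open>a < b\<close> by (simp add: zero_le_mult_iff)
    moreover have "(b - a) * x \<le> (b - a) * 1 \<longleftrightarrow> x \<le> 1"
      using \<open>a < b\<close> by (intro mult_le_cancel_left_pos) simp
    ultimately show ?thesis
      by (auto split: split_indicator)
  qed
  moreover have "(\<integral>\<^sup>+t\<in>{a..b}. f t \<partial>lborel)
      = ennreal \<bar>b - a\<bar> * (\<integral>\<^sup>+x. f (a + (b - a) * x) * indicator {a..b} (a + (b - a) * x) \<partial>lborel)"
    using \<open>a < b\<close> by (intro nn_integral_real_affine) auto
  ultimately show ?thesis
    using \<open>a < b\<close> by simp
qed

section \<open>Cauchy estimates on squares\<close>

lemma norm_contour_integral_linepath_le: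
  assumes "continuous_on (closed_segment a b) g"
  shows "ennreal (cmod (contour_integral (linepath a b) g))
    \<le> ennreal (cmod (b - a)) * (\<integral>\<^sup>+x\<in>{0..1}. ennreal (cmod (g (linepath a b x))) \<partial>lborel)"
proof -
  define \<phi> where "\<phi> = (\<lambda>x. cmod (g (linepath a b x)))"
  have cont: "continuous_on {0..1} (\<lambda>x. g (linepath a b x))"
    by (rule continuous_on_compose2[OF assms continuous_on_linepath]) (auto simp: linepath_image_01)
  then have contour: "((\<lambda>x. g (linepath a b x) * (b - a))
      has_integral contour_integral (linepath a b) g) {0..1}"
    by (intro has_contour_integral_linepath[THEN iffD1] has_contour_integral_integral
        contour_integrable_continuous_linepath assms)
  have \<phi>: "(\<phi> has_integral integral {0..1} \<phi>) {0..1}"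
    unfolding \<phi>_def using cont by (intro integrable_integral integrable_continuous_real continuous_intros)
  have lebesgue: "(\<integral>\<^sup>+x\<in>{0..1}. ennreal (\<phi> x) \<partial>lborel) = ennreal (integral {0..1} \<phi>)"
    by (rule nn_integral_has_integral_lebesgue'[OF _ \<phi>]) (simp add: \<phi>_def)
  have "cmod (contour_integral (linepath a b) g) \<le> integral {0..1} (\<lambda>x. \<phi> x * cmod (b - a))"
    unfolding integral_unique[OF contour, symmetric]
  proof (rule integral_norm_bound_integral)
    show "(\<lambda>x. g (linepath a b x) * (b - a)) integrable_on {0..1}"
      using contour by (rule has_integral_integrable)
    show "(\<lambda>x. \<phi> x * cmod (b - a)) integrable_on {0..1}"
      using \<phi> by (intro integrable_on_mult_left has_integral_integrable)
  qed (simp add: \<phi>_def norm_mult)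
  then have "ennreal (cmod (contour_integral (linepath a b) g)) \<le> ennreal (cmod (b - a) * integral {0..1} \<phi>)"
    by (simp add: mult.commute ennreal_leI)
  also have "\<dots> = ennreal (cmod (b - a)) * (\<integral>\<^sup>+x\<in>{0..1}. ennreal (\<phi> x) \<partial>lborel)"
    by (simp add: ennreal_mult' lebesgue)
  finally show ?thesis
    unfolding \<phi>_def .
qed

text \<open>
  The boundary of the square with centre z and half side s is traversed by the segments
  t \<mapsto> z + \<i>^k (t - \<i> s), -s \<le> t \<le> s, for k = 0, 1, 2, 3; the lemmas below allow any unit
  factor c in place of \<i>^k.
\<close>

lemma linepath_square_edge:
  "linepath (z + c * Complex (- s) (- s)) (z + c * Complex s (- s)) x
     = z + c * Complex (- s + 2 * s * x) (- s)"
  by (simp add: linepath_def complex_eq_iff algebra_simps)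

lemma abs_le_norm_unit_mult_Complex:
  assumes "cmod c = 1"
  shows "\<bar>s\<bar> \<le> cmod (c * Complex t (- s))"
  using abs_Im_le_cmod[of "Complex t (- s)"] by (simp add: norm_mult assms)

lemma centre_notin_square_edge:
  assumes "cmod c = 1" "s \<noteq> 0"
  shows "z \<notin> closed_segment (z + c * Complex (- s) (- s)) (z + c * Complex s (- s))"
  using abs_le_norm_unit_mult_Complex[OF assms(1), of s] assms(2)
  by (auto simp: linepath_image_01[symmetric] linepath_square_edge Complex_eq_0)

lemma norm_contour_integral_square_edge_le:
  fixes h :: "complex \<Rightarrow> complex" and z c :: complex and s :: real
  assumes h: "continuous_on UNIV h" and c: "cmod c = 1" and "s > 0"
  defines "e \<equiv> \<lambda>t. z + c * Complex t (- s)"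
  shows "ennreal (s * cmod (contour_integral (linepath (e (- s)) (e s)) (\<lambda>w. h w / (w - z))))
    \<le> (\<integral>\<^sup>+t\<in>{- s..s}. ennreal (cmod (h (e t))) \<partial>lborel)"
proof -
  define g where "g = (\<lambda>w. h w / (w - z))"
  have [measurable]: "h \<in> borel_measurable borel"
    using h by (rule borel_measurable_continuous_onI)
  have "continuous_on (closed_segment (e (- s)) (e s)) g"
    unfolding g_def e_def using centre_notin_square_edge[OF c, of s z] \<open>s > 0\<close>
    by (intro continuous_intros continuous_on_subset[OF h]) auto
  have [measurable]: "g \<in> borel_measurable borel"
    unfolding g_def by measurable
  have segment: "linepath (e (- s)) (e s) x = e (- s + 2 * s * x)" for x
    unfolding e_def by (rule linepath_square_edge)
  have integral_bound: "ennreal (cmod (contour_integral (linepath (e (- s)) (e s)) g))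
      \<le> ennreal (cmod (e s - e (- s))) * (\<integral>\<^sup>+x\<in>{0..1}. ennreal (cmod (g (e (- s + 2 * s * x)))) \<partial>lborel)"
    using norm_contour_integral_linepath_le[OF \<open>continuous_on _ g\<close>] by (simp only: segment)
  have "cmod (e s - e (- s)) = 2 * s"
  proof -
    have "e s - e (- s) = c * of_real (2 * s)"
      by (simp add: e_def complex_eq_iff algebra_simps)
    then show ?thesis
      using \<open>s > 0\<close> by (simp add: norm_mult c)
  qed
  have pointwise: "s * cmod (g (e t)) \<le> cmod (h (e t))" for t
  proof -
    have "s \<le> cmod (e t - z)"
      using abs_le_norm_unit_mult_Complex[OF c, of s t] \<open>s > 0\<close> by (simp add: e_def)
    then have "s * cmod (h (e t)) \<le> cmod (e t - z) * cmod (h (e t))"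
      by (rule mult_right_mono) simp
    then show ?thesis
      using \<open>s > 0\<close> by (simp add: g_def norm_divide divide_simps mult.commute)
  qed
  have "ennreal (s * cmod (contour_integral (linepath (e (- s)) (e s)) g))
      = ennreal s * ennreal (cmod (contour_integral (linepath (e (- s)) (e s)) g))"
    using \<open>s > 0\<close> by (simp add: ennreal_mult)
  also have "\<dots> \<le> ennreal s * (ennreal (2 * s)
      * (\<integral>\<^sup>+x\<in>{0..1}. ennreal (cmod (g (e (- s + 2 * s * x)))) \<partial>lborel))"
    using integral_bound \<open>cmod (e s - e (- s)) = 2 * s\<close> by (intro mult_left_mono) simp_all
  also have "\<dots> = ennreal (2 * s)
      * (\<integral>\<^sup>+x\<in>{0..1}. ennreal (s * cmod (g (e (- s + 2 * s * x)))) \<partial>lborel)"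
  proof -
    have [measurable]: "e \<in> borel_measurable borel"
      unfolding e_def by measurable
    have "(\<integral>\<^sup>+x\<in>{0..1}. ennreal (s * cmod (g (e (- s + 2 * s * x)))) \<partial>lborel)
        = ennreal s * (\<integral>\<^sup>+x\<in>{0..1}. ennreal (cmod (g (e (- s + 2 * s * x)))) \<partial>lborel)"
      using \<open>s > 0\<close> by (simp add: ennreal_mult nn_integral_cmult[symmetric] mult.assoc)
    then show ?thesis
      by (simp add: mult_ac)
  qed
  also have "\<dots> \<le> ennreal (2 * s) * (\<integral>\<^sup>+x\<in>{0..1}. ennreal (cmod (h (e (- s + 2 * s * x)))) \<partial>lborel)"
    by (intro mult_left_mono nn_integral_mono) (auto split: split_indicator intro: ennreal_leI pointwise)
  also have "\<dots> = (\<integral>\<^sup>+t\<in>{- s..s}. ennreal (cmod (h (e t))) \<partial>lborel)"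
    using nn_integral_interval_rescale[of "\<lambda>t. ennreal (cmod (h (e t)))" "- s" s] \<open>s > 0\<close>
    by (simp add: e_def)
  finally show ?thesis
    by (simp only: g_def)
qed

lemma rectpath_eq_square_edges:
  fixes z :: complex and s :: real
  defines "\<gamma> \<equiv> \<lambda>k::nat. linepath (z + \<i> ^ k * Complex (- s) (- s)) (z + \<i> ^ k * Complex s (- s))"
  shows "rectpath (z + Complex (- s) (- s)) (z + Complex s s) = \<gamma> 0 +++ \<gamma> 1 +++ \<gamma> 2 +++ \<gamma> 3"
    and "pathfinish (\<gamma> 0) = pathstart (\<gamma> 1)" "pathfinish (\<gamma> 1) = pathstart (\<gamma> 2)"
      "pathfinish (\<gamma> 2) = pathstart (\<gamma> 3)"
proof -
  define a b where "a = z + Complex (- s) (- s)" and "b = z + Complex s s"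
  have "z + \<i> ^ 0 * Complex (- s) (- s) = a" "z + \<i> ^ 0 * Complex s (- s) = Complex (Re b) (Im a)"
    "z + \<i> ^ 1 * Complex (- s) (- s) = Complex (Re b) (Im a)" "z + \<i> ^ 1 * Complex s (- s) = b"
    "z + \<i> ^ 2 * Complex (- s) (- s) = b" "z + \<i> ^ 2 * Complex s (- s) = Complex (Re a) (Im b)"
    "z + \<i> ^ 3 * Complex (- s) (- s) = Complex (Re a) (Im b)" "z + \<i> ^ 3 * Complex s (- s) = a"
    by (simp_all add: a_def b_def complex_eq_iff eval_nat_numeral)
  then show "rectpath (z + Complex (- s) (- s)) (z + Complex s s) = \<gamma> 0 +++ \<gamma> 1 +++ \<gamma> 2 +++ \<gamma> 3"
    "pathfinish (\<gamma> 0) = pathstart (\<gamma> 1)" "pathfinish (\<gamma> 1) = pathstart (\<gamma> 2)"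
    "pathfinish (\<gamma> 2) = pathstart (\<gamma> 3)"
    unfolding a_def[symmetric] b_def[symmetric]
    by (simp_all only: rectpath_def Let_def \<gamma>_def pathstart_linepath pathfinish_linepath)
qed

lemma Cauchy_integral_formula_square_edges:
  fixes h :: "complex \<Rightarrow> complex" and z :: complex and s :: real
  assumes hol: "h holomorphic_on UNIV" and "s > 0"
  shows "2 * pi * \<i> * h z = (\<Sum>k<4. contour_integral
      (linepath (z + \<i> ^ k * Complex (- s) (- s)) (z + \<i> ^ k * Complex s (- s))) (\<lambda>w. h w / (w - z)))"
proof -
  define g where "g = (\<lambda>w. h w / (w - z))"
  define \<gamma> where "\<gamma> k = linepath (z + \<i> ^ k * Complex (- s) (- s)) (z + \<i> ^ k * Complex s (- s))"
    for k :: nat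
  define a b where "a = z + Complex (- s) (- s)" and "b = z + Complex s s"
  have "z \<in> box a b"
    using \<open>s > 0\<close> by (simp add: a_def b_def in_box_complex_iff)
  moreover have "path_image (rectpath a b) \<subseteq> UNIV - {z}"
    using \<open>s > 0\<close> \<open>z \<in> box a b\<close>
    by (auto simp: a_def b_def path_image_rectpath_cbox_minus_box)
  ultimately have cauchy: "(g has_contour_integral 2 * pi * \<i> * h z) (rectpath a b)"
    using Cauchy_integral_formula_convex_simple[OF convex_UNIV hol, of z "rectpath a b"]
    by (simp add: g_def winding_number_rectpath)
  have rect: "rectpath a b = \<gamma> 0 +++ \<gamma> 1 +++ \<gamma> 2 +++ \<gamma> 3"
    and ends: "pathfinish (\<gamma> 0) = pathstart (\<gamma> 1)" "pathfinish (\<gamma> 1) = pathstart (\<gamma> 2)"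
      "pathfinish (\<gamma> 2) = pathstart (\<gamma> 3)"
    unfolding a_def b_def \<gamma>_def by (rule rectpath_eq_square_edges)+
  have integrable: "g contour_integrable_on \<gamma> k" for k
    unfolding \<gamma>_def g_def using centre_notin_square_edge[of "\<i> ^ k" s z] \<open>s > 0\<close>
    by (intro contour_integrable_continuous_linepath continuous_intros
        continuous_on_subset[OF holomorphic_on_imp_continuous_on[OF hol]]) (auto simp: norm_power)
  have valid: "valid_path (\<gamma> k)" for k
    by (simp add: \<gamma>_def)
  have "(g has_contour_integral contour_integral (\<gamma> 0) g + (contour_integral (\<gamma> 1) g
      + (contour_integral (\<gamma> 2) g + contour_integral (\<gamma> 3) g))) (rectpath a b)"
    unfolding rect using ends
    by (intro has_contour_integral_join has_contour_integral_integral valid_path_join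
        integrable valid) simp_all
  then show ?thesis
    using has_contour_integral_unique[OF cauchy]
    by (simp add: eval_nat_numeral add.assoc g_def \<gamma>_def)
qed

lemma norm_le_square_boundary_integral:
  fixes h :: "complex \<Rightarrow> complex" and z :: complex and s :: real
  assumes hol: "h holomorphic_on UNIV" and "s > 0"
  shows "ennreal (2 * pi * s * cmod (h z))
    \<le> (\<Sum>k<4. \<integral>\<^sup>+t\<in>{- s..s}. ennreal (cmod (h (z + \<i> ^ k * Complex t (- s)))) \<partial>lborel)"
proof -
  define I where "I k = contour_integral (linepath (z + \<i> ^ k * Complex (- s) (- s))
    (z + \<i> ^ k * Complex s (- s))) (\<lambda>w. h w / (w - z))" for k :: nat
  have "cmod (2 * pi * \<i> * h z) \<le> (\<Sum>k<4. cmod (I k))"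
    unfolding I_def Cauchy_integral_formula_square_edges[OF assms] by (rule norm_sum)
  then have "2 * pi * cmod (h z) * s \<le> (\<Sum>k<4. cmod (I k)) * s"
    using \<open>s > 0\<close> by (intro mult_right_mono) (simp_all add: norm_mult)
  then have "ennreal (2 * pi * s * cmod (h z)) \<le> (\<Sum>k<4. ennreal (s * cmod (I k)))"
    using \<open>s > 0\<close> by (simp add: sum_distrib_left mult_ac ennreal_leI)
  also have "\<dots> \<le> (\<Sum>k<4. \<integral>\<^sup>+t\<in>{- s..s}. ennreal (cmod (h (z + \<i> ^ k * Complex t (- s)))) \<partial>lborel)"
    unfolding I_def using \<open>s > 0\<close> holomorphic_on_imp_continuous_on[OF hol]
    by (intro sum_mono norm_contour_integral_square_edge_le) (simp_all add: norm_power)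
  finally show ?thesis .
qed

lemma mult_ii_mem_unit_square_iff:
  "\<i> * w \<in> cbox (Complex (- 1) (- 1)) (Complex 1 1) \<longleftrightarrow> w \<in> cbox (Complex (- 1) (- 1)) (Complex 1 1)"
  by (auto simp: in_cbox_complex_iff)

lemma nn_integral_unit_square_rotate:
  fixes G :: "complex \<Rightarrow> ennreal"
  assumes [measurable]: "G \<in> borel_measurable borel"
  shows "(\<integral>\<^sup>+w\<in>cbox (Complex (- 1) (- 1)) (Complex 1 1). G (\<i> ^ k * w) \<partial>lborel)
    = (\<integral>\<^sup>+w\<in>cbox (Complex (- 1) (- 1)) (Complex 1 1). G w \<partial>lborel)"
proof (induction k)
  case (Suc k)
  let ?Q = "cbox (Complex (- 1) (- 1)) (Complex 1 1)"
  have "indicator ?Q (\<i> * w) = (indicator ?Q w :: ennreal)" "\<i> ^ Suc k * w = \<i> ^ k * (\<i> * w)" for w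
    by (simp_all add: indicator_def mult_ii_mem_unit_square_iff)
  then have "(\<integral>\<^sup>+w\<in>?Q. G (\<i> ^ Suc k * w) \<partial>lborel)
      = (\<integral>\<^sup>+w. G (\<i> ^ k * (\<i> * w)) * indicator ?Q (\<i> * w) \<partial>lborel)"
    by (simp only:)
  also have "\<dots> = (\<integral>\<^sup>+w\<in>?Q. G (\<i> ^ k * w) \<partial>lborel)"
    by (rule nn_integral_lborel_mult_ii) measurable
  finally show ?case
    using Suc.IH by simp
qed simp

lemma nn_integral_strip_le_unit_square:
  fixes G :: "complex \<Rightarrow> ennreal"
  assumes [measurable]: "G \<in> borel_measurable borel"
  shows "(\<integral>\<^sup>+s\<in>{1/2..1}. (\<integral>\<^sup>+t\<in>{- 1..1}. G (Complex t (- s)) \<partial>lborel) \<partial>lborel)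
    \<le> (\<integral>\<^sup>+w\<in>cbox (Complex (- 1) (- 1)) (Complex 1 1). G w \<partial>lborel)"
proof -
  define H where "H y = (\<integral>\<^sup>+x\<in>{- 1..1}. G (Complex x y) \<partial>lborel)" for y
  have [measurable]: "H \<in> borel_measurable borel"
    unfolding H_def by measurable
  have "(\<integral>\<^sup>+y\<in>{- 1..- 1/2}. H y \<partial>lborel)
      = ennreal \<bar>- 1\<bar> * (\<integral>\<^sup>+s. H (0 + - 1 * s) * indicator {- 1..- 1/2} (0 + - 1 * s) \<partial>lborel)"
    by (rule nn_integral_real_affine) auto
  then have "(\<integral>\<^sup>+s\<in>{1/2..1}. H (- s) \<partial>lborel) = (\<integral>\<^sup>+y\<in>{- 1..- 1/2}. H y \<partial>lborel)"
    by (simp add: indicator_def conj_commute)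
  also have "\<dots> \<le> (\<integral>\<^sup>+y\<in>{- 1..1}. H y \<partial>lborel)"
    by (intro nn_integral_mono) (auto split: split_indicator)
  also have "\<dots> = (\<integral>\<^sup>+w\<in>cbox (Complex (- 1) (- 1)) (Complex 1 1). G w \<partial>lborel)"
    by (subst nn_integral_lborel_complex)
      (auto simp: H_def in_cbox_complex_iff indicator_def nn_integral_multc[symmetric] mult_ac
        intro!: nn_integral_cong)
  finally show ?thesis
    by (simp add: H_def)
qed

lemma norm_le_unit_square_integral:
  fixes h :: "complex \<Rightarrow> complex"
  assumes hol: "h holomorphic_on UNIV"
  shows "ennreal (pi * cmod (h z))
    \<le> 8 * (\<integral>\<^sup>+w\<in>cbox (Complex (- 1) (- 1)) (Complex 1 1). ennreal (cmod (h (z + w))) \<partial>lborel)"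
proof -
  let ?Q = "cbox (Complex (- 1) (- 1)) (Complex 1 1)"
  define G where "G k w = ennreal (cmod (h (z + \<i> ^ k * w)))" for k w
  have [measurable]: "h \<in> borel_measurable borel"
    using hol holomorphic_on_imp_continuous_on borel_measurable_continuous_onI by blast
  have [measurable]: "G k \<in> borel_measurable borel" for k
    unfolding G_def by measurable
  have bound: "ennreal (pi * cmod (h z)) \<le> (\<Sum>k<4. \<integral>\<^sup>+t\<in>{- 1..1}. G k (Complex t (- s)) \<partial>lborel)"
    if "s \<in> {1/2..1}" for s
  proof -
    have "pi * cmod (h z) * 1 \<le> pi * cmod (h z) * (2 * s)"
      using that by (intro mult_left_mono) auto
    then have "ennreal (pi * cmod (h z)) \<le> ennreal (2 * pi * s * cmod (h z))"
      by (intro ennreal_leI) (simp add: mult_ac)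
    also have "\<dots> \<le> (\<Sum>k<4. \<integral>\<^sup>+t\<in>{- s..s}. G k (Complex t (- s)) \<partial>lborel)"
      unfolding G_def using that by (intro norm_le_square_boundary_integral hol) auto
    also have "\<dots> \<le> (\<Sum>k<4. \<integral>\<^sup>+t\<in>{- 1..1}. G k (Complex t (- s)) \<partial>lborel)"
      using that by (intro sum_mono nn_integral_mono) (auto split: split_indicator)
    finally show ?thesis .
  qed
  have "ennreal (pi * cmod (h z)) = (\<integral>\<^sup>+s\<in>{1/2..1::real}. 2 * ennreal (pi * cmod (h z)) \<partial>lborel)"
    by (simp add: nn_integral_cmult_indicator ennreal_mult_divide_eq[unfolded divide_ennreal_def]
        mult.commute[of 2])
  also have "\<dots> \<le> (\<integral>\<^sup>+s\<in>{1/2..1}. 2 * (\<Sum>k<4. \<integral>\<^sup>+t\<in>{- 1..1}. G k (Complex t (- s)) \<partial>lborel) \<partial>lborel)"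
    by (intro nn_integral_mono) (auto split: split_indicator intro!: mult_left_mono bound)
  also have "\<dots> = 2 * (\<Sum>k<4. \<integral>\<^sup>+s\<in>{1/2..1}. (\<integral>\<^sup>+t\<in>{- 1..1}. G k (Complex t (- s)) \<partial>lborel) \<partial>lborel)"
  proof -
    have [measurable]: "(\<lambda>s. \<integral>\<^sup>+t\<in>{- 1..1}. G k (Complex t (- s)) \<partial>lborel) \<in> borel_measurable borel" for k
      by measurable
    show ?thesis
      unfolding mult.assoc sum_distrib_right
      by (subst nn_integral_sum[symmetric], measurable, rule nn_integral_cmult, measurable)
  qed
  also have "\<dots> \<le> 2 * (\<Sum>k<4. \<integral>\<^sup>+w\<in>?Q. G k w \<partial>lborel)"
    by (intro mult_left_mono sum_mono nn_integral_strip_le_unit_square) simp_all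
  also have "\<dots> = 2 * (4 * (\<integral>\<^sup>+w\<in>?Q. ennreal (cmod (h (z + w))) \<partial>lborel))"
    using nn_integral_unit_square_rotate[of "\<lambda>w. ennreal (cmod (h (z + w)))"]
    by (simp add: G_def)
  finally show ?thesis
    by (simp add: mult.assoc[symmetric])
qed

section \<open>Convergence of L^p norms to the essential supremum\<close>

lemma nn_integral_powr_le_bound_powr:
  fixes F :: "'a \<Rightarrow> real"
  assumes [measurable]: "F \<in> borel_measurable M" and nonneg: "\<And>x. 0 \<le> F x"
    and bound: "AE x in M. F x \<le> L" and "p0 \<le> p"
  shows "(\<integral>\<^sup>+x. ennreal (F x powr p) \<partial>M) \<le> ennreal (L powr (p - p0)) * (\<integral>\<^sup>+x. ennreal (F x powr p0) \<partial>M)"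
proof -
  have "(\<integral>\<^sup>+x. ennreal (F x powr p) \<partial>M) \<le> (\<integral>\<^sup>+x. ennreal (L powr (p - p0)) * ennreal (F x powr p0) \<partial>M)"
  proof (rule nn_integral_mono_AE)
    show "AE x in M. ennreal (F x powr p) \<le> ennreal (L powr (p - p0)) * ennreal (F x powr p0)"
      using bound
    proof eventually_elim
      case (elim x)
      have "F x powr p = F x powr (p - p0) * F x powr p0"
        by (simp add: powr_add[symmetric])
      also have "\<dots> \<le> L powr (p - p0) * F x powr p0"
        using elim \<open>p0 \<le> p\<close> nonneg[of x] by (intro mult_right_mono powr_mono2) auto
      finally show ?case
        by (simp add: ennreal_mult[symmetric] ennreal_leI)
    qed
  qed
  then show ?thesis
    by (simp add: nn_integral_cmult)
qed

lemma emeasure_level_set_le_nn_integral_powr: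
  fixes F :: "'a \<Rightarrow> real"
  assumes [measurable]: "F \<in> borel_measurable M" and "0 \<le> c" "0 \<le> p"
  shows "ennreal (c powr p) * emeasure M {x \<in> space M. c < F x} \<le> (\<integral>\<^sup>+x. ennreal (F x powr p) \<partial>M)"
proof -
  have "ennreal (c powr p) * emeasure M {x \<in> space M. c < F x}
      = (\<integral>\<^sup>+x. ennreal (c powr p) * indicator {x \<in> space M. c < F x} x \<partial>M)"
    by (simp add: nn_integral_cmult_indicator)
  also have "\<dots> \<le> (\<integral>\<^sup>+x. ennreal (F x powr p) \<partial>M)"
    using assms by (intro nn_integral_mono) (auto split: split_indicator intro!: ennreal_leI powr_mono2)
  finally show ?thesis .
qed

lemma esssup_nonneg:
  fixes F :: "'a \<Rightarrow> real"
  assumes "F \<in> borel_measurable M" "\<And>x. 0 \<le> F x" "emeasure M (space M) \<noteq> 0"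
  shows "0 \<le> esssup M (\<lambda>x. ereal (F x))"
proof -
  have "esssup M (\<lambda>x. 0 :: ereal) \<le> esssup M (\<lambda>x. ereal (F x))"
    using assms(2) by (intro esssup_mono) auto
  moreover have "esssup M (\<lambda>x. 0 :: ereal) = 0"
    by (rule esssup_const[OF assms(3)])
  ultimately show ?thesis
    by simp
qed

lemma root_nn_integral_powr_le:
  fixes F :: "'a \<Rightarrow> real"
  assumes [measurable]: "F \<in> borel_measurable M" and nonneg: "\<And>x. 0 \<le> F x"
    and bound: "AE x in M. F x \<le> L" and "0 \<le> L" and "0 < p0" "p0 \<le> p"
    and finite: "(\<integral>\<^sup>+x. ennreal (F x powr p0) \<partial>M) < \<infinity>"
  shows "enn2real (\<integral>\<^sup>+x. ennreal (F x powr p) \<partial>M) powr (1 / p)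
    \<le> L powr ((p - p0) / p) * (enn2real (\<integral>\<^sup>+x. ennreal (F x powr p0) \<partial>M) + 1) powr (1 / p)"
proof -
  define I where "I q = (\<integral>\<^sup>+x. ennreal (F x powr q) \<partial>M)" for q
  define C where "C = enn2real (I p0) + 1" \<comment> \<open>positive, so that C^{1/p} \<rightarrow> 1\<close>
  have "I p \<le> ennreal (L powr (p - p0)) * I p0"
    unfolding I_def using bound \<open>p0 \<le> p\<close> by (intro nn_integral_powr_le_bound_powr nonneg) auto
  then have "enn2real (I p) \<le> L powr (p - p0) * enn2real (I p0)"
    using enn2real_mono finite by (fastforce simp: I_def enn2real_mult ennreal_mult_less_top)
  also have "\<dots> \<le> L powr (p - p0) * C"
    by (intro mult_left_mono) (simp_all add: C_def)
  finally have "enn2real (I p) powr (1 / p) \<le> (L powr (p - p0) * C) powr (1 / p)"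
    using \<open>0 < p0\<close> \<open>p0 \<le> p\<close> by (intro powr_mono2) auto
  also have "\<dots> = L powr ((p - p0) / p) * C powr (1 / p)"
    using \<open>0 \<le> L\<close> by (simp add: C_def powr_mult powr_powr add_nonneg_pos)
  finally show ?thesis
    by (simp add: I_def C_def)
qed

lemma root_nn_integral_powr_ge:
  fixes F :: "'a \<Rightarrow> real"
  assumes [measurable]: "F \<in> borel_measurable M" and "0 < c" "0 < p"
    and finite: "(\<integral>\<^sup>+x. ennreal (F x powr p) \<partial>M) < \<infinity>"
  shows "c * enn2real (emeasure M {x \<in> space M. c < F x}) powr (1 / p)
    \<le> enn2real (\<integral>\<^sup>+x. ennreal (F x powr p) \<partial>M) powr (1 / p)"
proof -
  define m where "m = enn2real (emeasure M {x \<in> space M. c < F x})"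
  have "enn2real (ennreal (c powr p) * emeasure M {x \<in> space M. c < F x})
      \<le> enn2real (\<integral>\<^sup>+x. ennreal (F x powr p) \<partial>M)"
    using emeasure_level_set_le_nn_integral_powr[of F M c p] finite \<open>0 < c\<close> \<open>0 < p\<close>
    by (intro enn2real_mono) auto
  then have "c powr p * m \<le> enn2real (\<integral>\<^sup>+x. ennreal (F x powr p) \<partial>M)"
    by (simp add: m_def enn2real_mult)
  then have "(c powr p * m) powr (1 / p) \<le> enn2real (\<integral>\<^sup>+x. ennreal (F x powr p) \<partial>M) powr (1 / p)"
    using \<open>0 < c\<close> \<open>0 < p\<close> by (intro powr_mono2) (auto simp: m_def)
  then show ?thesis
    using \<open>0 < c\<close> \<open>0 < p\<close> by (simp add: powr_mult powr_powr m_def)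
qed

theorem tendsto_root_nn_integral_powr_esssup:
  fixes F :: "'a \<Rightarrow> real"
  assumes [measurable]: "F \<in> borel_measurable M" and nonneg: "\<And>x. 0 \<le> F x"
    and "0 < p0" and finite: "(\<integral>\<^sup>+x. ennreal (F x powr p0) \<partial>M) < \<infinity>"
    and esssup: "esssup M (\<lambda>x. ereal (F x)) = ereal L"
  shows "((\<lambda>p. enn2real (\<integral>\<^sup>+x. ennreal (F x powr p) \<partial>M) powr (1 / p)) \<longlongrightarrow> L) at_top"
proof -
  define I where "I p = (\<integral>\<^sup>+x. ennreal (F x powr p) \<partial>M)" for p
  have AE_le: "AE x in M. F x \<le> L"
    using esssup_AE[of "\<lambda>x. ereal (F x)" M] esssup by simp
  have "emeasure M (space M) \<noteq> 0"
    using esssup esssup_zero_space[of M "\<lambda>x. ereal (F x)"] by auto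
  then have "0 \<le> L"
    using esssup_nonneg[of F M] esssup nonneg by simp
  have I_finite: "I p < \<infinity>" if "p0 \<le> p" for p
    using nn_integral_powr_le_bound_powr[OF _ nonneg AE_le that] finite
    by (auto simp: I_def ennreal_mult_less_top intro: le_less_trans)
  show ?thesis
    unfolding I_def[symmetric]
  proof (rule order_tendstoI)
    fix a assume "L < a"
    define C where "C = enn2real (I p0) + 1"
    have "C > 0"
      by (simp add: C_def add_nonneg_pos)
    then have "((\<lambda>p. L powr ((p - p0) / p) * C powr (1 / p)) \<longlongrightarrow> L powr 1 * C powr 0) at_top"
      using \<open>0 \<le> L\<close> by (intro tendsto_intros) (real_asymp, auto, real_asymp)
    then have limit: "eventually (\<lambda>p. L powr ((p - p0) / p) * C powr (1 / p) < a) at_top"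
      using \<open>L < a\<close> \<open>0 \<le> L\<close> \<open>C > 0\<close> by (intro order_tendstoD(2)) auto
    have bound: "enn2real (I p) powr (1 / p) \<le> L powr ((p - p0) / p) * C powr (1 / p)" if "p0 \<le> p" for p
      unfolding I_def C_def
      by (rule root_nn_integral_powr_le[OF _ nonneg AE_le \<open>0 \<le> L\<close> \<open>0 < p0\<close> that finite]) simp
    show "eventually (\<lambda>p. enn2real (I p) powr (1 / p) < a) at_top"
      using limit eventually_ge_at_top[of p0] by eventually_elim (auto intro: le_less_trans bound)
  next
    fix a assume "a < L"
    show "eventually (\<lambda>p. a < enn2real (I p) powr (1 / p)) at_top"
    proof (cases "a < 0")
      case True
      then show ?thesis
        by (intro always_eventually) (auto intro: less_le_trans)
    next
      case False
      define c where "c = (a + L) / 2"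
      have "0 < c" "c < L" "a < c"
        using False \<open>a < L\<close> by (auto simp: c_def)
      define S where "S = {x \<in> space M. c < F x}"
      have "emeasure M S > 0"
        using esssup_pos_measure[of "\<lambda>x. ereal (F x)" M c] esssup \<open>c < L\<close> by (simp add: S_def)
      moreover have "emeasure M S < \<infinity>"
      proof -
        have "ennreal (c powr p0) * emeasure M S < \<infinity>"
          using emeasure_level_set_le_nn_integral_powr[of F M c p0] finite \<open>0 < p0\<close> \<open>0 < c\<close>
          by (simp add: S_def le_less_trans)
        then show ?thesis
          using \<open>0 < c\<close> by (auto simp: ennreal_mult_less_top)
      qed
      ultimately have "0 < enn2real (emeasure M S)"
        by (simp add: enn2real_positive_iff)
      then have "((\<lambda>p. c * enn2real (emeasure M S) powr (1 / p))
          \<longlongrightarrow> c * enn2real (emeasure M S) powr 0) at_top"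
        by (intro tendsto_intros) (real_asymp, simp)
      then have limit: "eventually (\<lambda>p. a < c * enn2real (emeasure M S) powr (1 / p)) at_top"
        using \<open>a < c\<close> \<open>0 < enn2real (emeasure M S)\<close> by (intro order_tendstoD(1)) auto
      have bound: "c * enn2real (emeasure M S) powr (1 / p) \<le> enn2real (I p) powr (1 / p)"
        if "p0 \<le> p" for p
        unfolding I_def S_def using \<open>0 < p0\<close> that I_finite[OF that]
        by (intro root_nn_integral_powr_ge[OF _ \<open>0 < c\<close>]) (auto simp: I_def)
      show ?thesis
        using limit eventually_ge_at_top[of p0] by eventually_elim (auto intro: less_le_trans bound)
    qed
  qed
qed

section \<open>The Fock weight of a function in F^p_\<alpha>\<close>

definition fock_weight :: "real \<Rightarrow> (complex \<Rightarrow> complex) \<Rightarrow> complex \<Rightarrow> real" where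
  "fock_weight \<alpha> f z = cmod (f z) * exp (- \<alpha> * (cmod z)\<^sup>2 / 2)"

lemma fock_integral_eq: "fock_integral p \<alpha> f = (\<integral>\<^sup>+z. ennreal (fock_weight \<alpha> f z powr p) \<partial>lborel)"
  by (simp add: fock_integral_def fock_weight_def)

lemma fock_norm_inf_eq: "fock_norm_inf \<alpha> f = esssup lborel (\<lambda>z. ereal (fock_weight \<alpha> f z))"
  by (simp add: fock_norm_inf_def fock_weight_def)

lemma fock_weight_nonneg: "0 \<le> fock_weight \<alpha> f z"
  by (simp add: fock_weight_def)

lemma borel_measurable_fock_weight [measurable]:
  assumes "f holomorphic_on UNIV"
  shows "fock_weight \<alpha> f \<in> borel_measurable borel"
proof -
  have [measurable]: "f \<in> borel_measurable borel"
    using assms holomorphic_on_imp_continuous_on borel_measurable_continuous_onI by blast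
  show ?thesis
    unfolding fock_weight_def[abs_def] by measurable
qed

lemma norm_mult_exp_fock_shift:
  "cmod (f w * exp (of_real (\<alpha> * (cmod z)\<^sup>2 / 2) - of_real \<alpha> * cnj z * w))
     = fock_weight \<alpha> f w * exp (\<alpha> * (cmod (w - z))\<^sup>2 / 2)"
proof -
  have "Re (of_real (\<alpha> * (cmod z)\<^sup>2 / 2) - of_real \<alpha> * cnj z * w)
      = \<alpha> * (cmod z)\<^sup>2 / 2 - \<alpha> * (Re z * Re w + Im z * Im w)"
    by (simp add: algebra_simps)
  also have "\<dots> = - \<alpha> * (cmod w)\<^sup>2 / 2 + \<alpha> * (cmod (w - z))\<^sup>2 / 2"
    unfolding cmod_power2 by (simp add: power2_eq_square field_simps)
  finally have Re_eq: "Re (of_real (\<alpha> * (cmod z)\<^sup>2 / 2) - of_real \<alpha> * cnj z * w)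
      = - \<alpha> * (cmod w)\<^sup>2 / 2 + \<alpha> * (cmod (w - z))\<^sup>2 / 2" .
  then have "cmod (exp (of_real (\<alpha> * (cmod z)\<^sup>2 / 2) - of_real \<alpha> * cnj z * w))
      = exp (- \<alpha> * (cmod w)\<^sup>2 / 2) * exp (\<alpha> * (cmod (w - z))\<^sup>2 / 2)"
    by (simp only: norm_exp_eq_Re Re_eq exp_add)
  then show ?thesis
    unfolding norm_mult fock_weight_def by (simp only: mult.assoc)
qed

lemma le_one_plus_powr:
  fixes v p :: real
  assumes "0 \<le> v" "1 \<le> p"
  shows "v \<le> 1 + v powr p"
proof (cases "v \<le> 1")
  case False
  then have "v powr 1 \<le> v powr p"
    using assms by (intro powr_mono) auto
  then show ?thesis
    using False by simp
qed (use powr_ge_zero[of v p] in linarith)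

lemma fock_weight_le_unit_square_integral:
  assumes "f holomorphic_on UNIV"
  shows "ennreal (pi * fock_weight \<alpha> f z) \<le> 8 * (\<integral>\<^sup>+u\<in>cbox (Complex (- 1) (- 1)) (Complex 1 1).
      ennreal (fock_weight \<alpha> f (z + u) * exp (\<alpha> * (cmod u)\<^sup>2 / 2)) \<partial>lborel)"
proof -
  define h where "h w = f w * exp (of_real (\<alpha> * (cmod z)\<^sup>2 / 2) - of_real \<alpha> * cnj z * w)" for w
  have "h holomorphic_on UNIV"
    unfolding h_def by (intro holomorphic_intros assms)
  moreover have h_eq: "cmod (h (z + u)) = fock_weight \<alpha> f (z + u) * exp (\<alpha> * (cmod u)\<^sup>2 / 2)" for u
    unfolding h_def norm_mult_exp_fock_shift by simp
  ultimately show ?thesis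
    using norm_le_unit_square_integral[of h z] h_eq[of 0] by (simp add: h_eq)
qed

lemma fock_weight_le_fock_integral:
  assumes "0 \<le> \<alpha>" and hol: "f holomorphic_on UNIV" and "1 \<le> p"
  shows "ennreal (pi * fock_weight \<alpha> f z) \<le> 8 * ennreal (exp \<alpha>) * (4 + fock_integral p \<alpha> f)"
proof -
  let ?Q = "cbox (Complex (- 1) (- 1)) (Complex 1 1)"
  define F where "F = fock_weight \<alpha> f"
  have [measurable]: "F \<in> borel_measurable borel"
    unfolding F_def using hol by measurable
  have on_square: "F (z + u) * exp (\<alpha> * (cmod u)\<^sup>2 / 2) \<le> exp \<alpha> * (1 + F (z + u) powr p)"
    if "u \<in> ?Q" for u
  proof -
    have "(Re u)\<^sup>2 \<le> 1" "(Im u)\<^sup>2 \<le> 1"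
      using that by (auto simp: in_cbox_complex_iff abs_square_le_1)
    then have "(cmod u)\<^sup>2 \<le> 2"
      unfolding cmod_power2 by linarith
    then have "\<alpha> * (cmod u)\<^sup>2 \<le> \<alpha> * 2"
      using \<open>0 \<le> \<alpha>\<close> by (rule mult_left_mono)
    then have "exp (\<alpha> * (cmod u)\<^sup>2 / 2) \<le> exp \<alpha>"
      by simp
    moreover have "F (z + u) \<le> 1 + F (z + u) powr p"
      using \<open>1 \<le> p\<close> by (intro le_one_plus_powr) (simp add: F_def fock_weight_nonneg)
    ultimately show ?thesis
      by (subst mult.commute, intro mult_mono) (simp_all add: F_def fock_weight_nonneg)
  qed
  have "ennreal (pi * F z)
      \<le> 8 * (\<integral>\<^sup>+u\<in>?Q. ennreal (F (z + u) * exp (\<alpha> * (cmod u)\<^sup>2 / 2)) \<partial>lborel)"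
    unfolding F_def by (rule fock_weight_le_unit_square_integral[OF hol])
  also have "\<dots> \<le> 8 * (\<integral>\<^sup>+u. ennreal (exp \<alpha>) * (indicator ?Q u + ennreal (F (z + u) powr p)) \<partial>lborel)"
  proof (intro mult_left_mono nn_integral_mono)
    fix u
    show "ennreal (F (z + u) * exp (\<alpha> * (cmod u)\<^sup>2 / 2)) * indicator ?Q u
        \<le> ennreal (exp \<alpha>) * (indicator ?Q u + ennreal (F (z + u) powr p))"
    proof (cases "u \<in> ?Q")
      case True
      have "ennreal (F (z + u) * exp (\<alpha> * (cmod u)\<^sup>2 / 2)) \<le> ennreal (exp \<alpha> * (1 + F (z + u) powr p))"
        using on_square[OF True] by (rule ennreal_leI)
      also have "\<dots> = ennreal (exp \<alpha>) * (1 + ennreal (F (z + u) powr p))"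
        by (simp add: ennreal_mult ennreal_plus)
      finally show ?thesis
        using True by simp
    qed simp
  qed simp
  also have "\<dots> = 8 * ennreal (exp \<alpha>) * (emeasure lborel ?Q + (\<integral>\<^sup>+u. ennreal (F (z + u) powr p) \<partial>lborel))"
    by (simp add: nn_integral_cmult nn_integral_add mult.assoc)
  also have "(\<integral>\<^sup>+u. ennreal (F (z + u) powr p) \<partial>lborel) = fock_integral p \<alpha> f"
    unfolding fock_integral_eq F_def by (rule nn_integral_lborel_translate) (use hol in measurable)
  finally show ?thesis
    by (simp add: F_def emeasure_lborel_cbox_eq Basis_complex_def)
qed

lemma fock_weight_bounded:
  assumes "0 \<le> \<alpha>" and hol: "f holomorphic_on UNIV" and "1 \<le> p"
    and finite: "fock_integral p \<alpha> f < \<infinity>"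
  shows "\<exists>B. \<forall>z. fock_weight \<alpha> f z \<le> B"
proof -
  define K where "K = 8 * ennreal (exp \<alpha>) * (4 + fock_integral p \<alpha> f)"
  have "K < \<infinity>"
    using finite by (simp add: K_def ennreal_mult_less_top)
  have "pi * fock_weight \<alpha> f z \<le> enn2real K" for z
  proof -
    have "pi * fock_weight \<alpha> f z = enn2real (ennreal (pi * fock_weight \<alpha> f z))"
      by (simp add: fock_weight_nonneg)
    also have "\<dots> \<le> enn2real K"
      using fock_weight_le_fock_integral[OF assms(1-3), of z] \<open>K < \<infinity>\<close>
      by (intro enn2real_mono) (auto simp: K_def)
    finally show ?thesis .
  qed
  then have "fock_weight \<alpha> f z \<le> enn2real K / pi" for z
    by (simp add: field_simps)
  then show ?thesis
    by blast
qed

lemma fock_norm_inf_finite: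
  assumes "0 \<le> \<alpha>" and hol: "f holomorphic_on UNIV" and "1 \<le> p"
    and "fock_integral p \<alpha> f < \<infinity>"
  obtains L where "fock_norm_inf \<alpha> f = ereal L"
proof -
  obtain B where "\<And>z. fock_weight \<alpha> f z \<le> B"
    using fock_weight_bounded[OF assms] by auto
  then have "fock_norm_inf \<alpha> f \<le> ereal B"
    unfolding fock_norm_inf_eq by (intro esssup_I) (use hol in auto)
  moreover have "0 \<le> fock_norm_inf \<alpha> f"
    unfolding fock_norm_inf_eq by (intro esssup_nonneg) (use hol in \<open>auto simp: fock_weight_nonneg\<close>)
  ultimately show ?thesis
    using that by (cases "fock_norm_inf \<alpha> f") auto
qed

lemma fock_norm_eq_root_fock_integral:
  assumes "0 < \<alpha>" "0 < p"
  shows "fock_norm p \<alpha> f = (p * \<alpha> / (2 * pi)) powr (1 / p) * enn2real (fock_integral p \<alpha> f) powr (1 / p)"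
  using assms by (simp add: fock_norm_def powr_mult[symmetric])

theorem lemma2p4:
  fixes \<alpha> :: real and f :: "complex \<Rightarrow> complex"
  assumes "\<alpha> > 0"
    and "f holomorphic_on UNIV"
    and "f \<in> (\<Union>p\<in>{1..}. fock_space p \<alpha>)"
  shows "((\<lambda>p. ereal (fock_norm p \<alpha> f)) \<longlongrightarrow> fock_norm_inf \<alpha> f) at_top"
proof -
  note hol = assms(2)
  obtain p0 where "1 \<le> p0" and finite: "fock_integral p0 \<alpha> f < \<infinity>"
    using assms(3) by (auto simp: fock_space_def)
  obtain L where L: "fock_norm_inf \<alpha> f = ereal L"
    using fock_norm_inf_finite[OF _ hol \<open>1 \<le> p0\<close> finite] \<open>\<alpha> > 0\<close> by auto
  have "((\<lambda>p. enn2real (fock_integral p \<alpha> f) powr (1 / p)) \<longlongrightarrow> L) at_top"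
    unfolding fock_integral_eq using \<open>1 \<le> p0\<close> finite L hol
    by (intro tendsto_root_nn_integral_powr_esssup[of "fock_weight \<alpha> f" lborel p0 L])
      (auto simp: fock_weight_nonneg fock_integral_eq fock_norm_inf_eq)
  moreover have "((\<lambda>p. (p * \<alpha> / (2 * pi)) powr (1 / p)) \<longlongrightarrow> 1) at_top"
    using \<open>\<alpha> > 0\<close> by real_asymp
  ultimately have "((\<lambda>p. (p * \<alpha> / (2 * pi)) powr (1 / p) * enn2real (fock_integral p \<alpha> f) powr (1 / p))
      \<longlongrightarrow> 1 * L) at_top"
    by (intro tendsto_mult)
  moreover have "\<forall>\<^sub>F p in at_top.
      (p * \<alpha> / (2 * pi)) powr (1 / p) * enn2real (fock_integral p \<alpha> f) powr (1 / p) = fock_norm p \<alpha> f"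
    using eventually_gt_at_top[of 0]
    by eventually_elim (simp add: fock_norm_eq_root_fock_integral \<open>\<alpha> > 0\<close>)
  ultimately have "((\<lambda>p. fock_norm p \<alpha> f) \<longlongrightarrow> L) at_top"
    by (simp add: Lim_transform_eventually)
  then show ?thesis
    unfolding L by (rule tendsto_ereal)
qed

end
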